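(* Let $T$ be a tree and $S$ a labeling of $T$ such that $(T,S)\in\mathscr{T}_2$. Then $\gamma^{d}_2(T)=\frac{n(T)+s(T)+l(T)}{4}$.
   Context: Graphs are finite and simple. For a vertex $v$ of a graph $G$, $N(v)$ is its open neighborhood, $N[v]=N(v)\cup\{v\}$, $d(v)=|N(v)|$. A leaf is a vertex of degree $1$; a support vertex is a vertex adjacent to a leaf. For a tree $T$, $n(T)$, $l(T)$, $s(T)$ denote its order, number of leaves and number of support vertices. A set $D\subseteq V(G)$ is a disjunctive dominating set ($2DD$-set) of $G$ if every vertex $v\notin D$ either has a neighbor in $D$ or has at least two vertices of $D$ at distance exactly $2$ from it. $\gamma^{d}_2(G)$ is the minimum size of a $2DD$-set. Labeled trees: a labeling of a tree $T$ is a partition $S=(S_A,S_B,S_C,S_D)$ of $V(T)$ into four (possibly empty) sets; $\mathrm{sta}(v)$ is the letter $x$ with $v\in S_x$. The family $\mathscr{T}_2$ is built from the starting labeled tree $(P_4,S'')$, where $S''$ gives the two leaves of $P_4$ status $C$ and the two internal vertices status $A$; in any tree built from it, this original $P_4$ is called the basic path. Corresponding vertices: if $v$ is a vertex with $\mathrm{sta}(v)=A$ that is not a support vertex and not on the basic path, a vertex $u$ is a corresponding vertex of $v$ if there is an induced path $vv_1v_2u$ with $\mathrm{sta}(v_1)=C$, $\mathrm{sta}(v_2)=D$, $\mathrm{sta}(u)=B$; if $\mathrm{sta}(u)=B$, a vertex $v$ is a corresponding vertex of $u$ if there is an induced path $vv_1v_2u$ with $\mathrm{sta}(v)=A$, $\mathrm{sta}(v_1)=C$,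 $\mathrm{sta}(v_2)=D$. Operation $\mathscr{O}_2$: choose $v$ with $\mathrm{sta}(v)=B$ having a corresponding vertex of degree two; add a new path $u_1u_2$ and the edge $u_1v$, with $\mathrm{sta}(u_1)=A$, $\mathrm{sta}(u_2)=C$. Operation $\mathscr{O}_3$: choose $v$ with $\mathrm{sta}(v)=C$ and $d(v)=1$; add a new path $u_1u_2u_3u_4$ and the edge $u_1v$, with $\mathrm{sta}(u_1)=D$, $\mathrm{sta}(u_2)=B$, $\mathrm{sta}(u_3)=A$, $\mathrm{sta}(u_4)=C$. Operation $\mathscr{O}_4$: choose $v$ not on the basic path with $\mathrm{sta}(v)=A$ having a corresponding vertex of degree two; add a new path $u_1u_2$ and the edge $u_1v$, with $\mathrm{sta}(u_1)=A$, $\mathrm{sta}(u_2)=C$. (Existing vertices keep their statuses.) $\mathscr{T}_2$ is the smallest family of labeled trees containing $(P_4,S'')$ and closed under $\mathscr{O}_2$, $\mathscr{O}_3$, $\mathscr{O}_4$. *)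

theory Defs
  imports Main "HOL-Library.Multiset" Complex_Main
begin

datatype status = SA | SB | SC | SD

definition adj :: "'a set set \<Rightarrow> 'a \<Rightarrow> 'a \<Rightarrow> bool" where
  "adj E u v \<longleftrightarrow> u \<noteq> v \<and> {u, v} \<in> E"

definition deg :: "'a set \<Rightarrow> 'a set set \<Rightarrow> 'a \<Rightarrow> nat" where
  "deg V E v = card {u \<in> V. adj E v u}"

definition leaves :: "'a set \<Rightarrow> 'a set set \<Rightarrow> 'a set" where
  "leaves V E = {v \<in> V. deg V E v = 1}"

definition supports :: "'a set \<Rightarrow> 'a set set \<Rightarrow> 'a set" where
  "supports V E = {v \<in> V. \<exists>u \<in> leaves V E. adj E v u}"

definition dist2 :: "'a set \<Rightarrow> 'a set set \<Rightarrow> 'a \<Rightarrow> 'a \<Rightarrow> bool" where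
  "dist2 V E u v \<longleftrightarrow> u \<noteq> v \<and> \<not> adj E u v \<and> (\<exists>w \<in> V. adj E u w \<and> adj E w v)"

definition is_2DD :: "'a set \<Rightarrow> 'a set set \<Rightarrow> 'a set \<Rightarrow> bool" where
  "is_2DD V E D \<longleftrightarrow> D \<subseteq> V \<and>
     (\<forall>v \<in> V - D. (\<exists>u \<in> D. adj E v u) \<or>
        (\<exists>u \<in> D. \<exists>w \<in> D. u \<noteq> w \<and> dist2 V E v u \<and> dist2 V E v w))"

definition gamma2d :: "'a set \<Rightarrow> 'a set set \<Rightarrow> nat" where
  "gamma2d V E = (LEAST k. \<exists>D. is_2DD V E D \<and> card D = k)"

definition induced_P4 :: "'a set set \<Rightarrow> 'a \<Rightarrow> 'a \<Rightarrow> 'a \<Rightarrow> 'a \<Rightarrow> bool" where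
  "induced_P4 E a b c d \<longleftrightarrow> distinct [a, b, c, d] \<and>
     adj E a b \<and> adj E b c \<and> adj E c d \<and>
     \<not> adj E a c \<and> \<not> adj E a d \<and> \<not> adj E b d"

definition corr_of_A :: "'a set \<Rightarrow> 'a set set \<Rightarrow> ('a \<Rightarrow> status) \<Rightarrow> 'a set \<Rightarrow> 'a \<Rightarrow> 'a \<Rightarrow> bool" where
  "corr_of_A V E S P v u \<longleftrightarrow> v \<in> V \<and> S v = SA \<and> v \<notin> supports V E \<and> v \<notin> P \<and>
     (\<exists>v1 v2. induced_P4 E v v1 v2 u \<and> S v1 = SC \<and> S v2 = SD \<and> S u = SB)"

definition corr_of_B :: "'a set \<Rightarrow> 'a set set \<Rightarrow> ('a \<Rightarrow> status) \<Rightarrow> 'a \<Rightarrow> 'a \<Rightarrow> bool" where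
  "corr_of_B V E S u v \<longleftrightarrow> u \<in> V \<and> S u = SB \<and>
     (\<exists>v1 v2. induced_P4 E v v1 v2 u \<and> S v = SA \<and> S v1 = SC \<and> S v2 = SD)"

(* T2 V E S P : labeled tree (V,E,S) in the family, with basic path P.
   The labeling S is only relevant on V. *)
inductive T2 :: "'a set \<Rightarrow> 'a set set \<Rightarrow> ('a \<Rightarrow> status) \<Rightarrow> 'a set \<Rightarrow> bool" where
  base: "\<lbrakk> distinct [a, b, c, d]; S a = SC; S b = SA; S c = SA; S d = SC \<rbrakk> \<Longrightarrow>
         T2 {a, b, c, d} {{a, b}, {b, c}, {c, d}} S {a, b, c, d}"
| O2: "\<lbrakk> T2 V E S P; v \<in> V; S v = SB;
         \<exists>w \<in> V. corr_of_B V E S v w \<and> deg V E w = 2;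
         u1 \<notin> V; u2 \<notin> V; u1 \<noteq> u2 \<rbrakk> \<Longrightarrow>
         T2 (V \<union> {u1, u2}) (E \<union> {{u1, u2}, {u1, v}}) (S(u1 := SA, u2 := SC)) P"
| O3: "\<lbrakk> T2 V E S P; v \<in> V; S v = SC; deg V E v = 1;
         distinct [u1, u2, u3, u4]; u1 \<notin> V; u2 \<notin> V; u3 \<notin> V; u4 \<notin> V \<rbrakk> \<Longrightarrow>
         T2 (V \<union> {u1, u2, u3, u4}) (E \<union> {{u1, u2}, {u2, u3}, {u3, u4}, {u1, v}})
            (S(u1 := SD, u2 := SB, u3 := SA, u4 := SC)) P"
| O4: "\<lbrakk> T2 V E S P; v \<in> V; v \<notin> P; S v = SA;
         \<exists>w \<in> V. corr_of_A V E S P v w \<and> deg V E w = 2;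
         u1 \<notin> V; u2 \<notin> V; u1 \<noteq> u2 \<rbrakk> \<Longrightarrow>
         T2 (V \<union> {u1, u2}) (E \<union> {{u1, u2}, {u1, v}}) (S(u1 := SA, u2 := SC)) P"

end

theory Submission
  imports Defs
begin

(*
  The A-vertices of a labelled tree in T2 form a 2DD-set: B- and C-vertices have an A-neighbour,
  and a D-vertex lies between a C- and a B-vertex with distinct A-neighbours, which are at
  distance two from it. Conversely each A-vertex x owns a gadget, a C-leaf at x or a pendant path
  x c d b with c and d of degree two, and degree bounds force every 2DD-set to meet each gadget;
  as gadgets of distinct A-vertices are disjoint, gamma_2^d = |A|. Every operation adds exactly one
  A-vertex and increases n + s + l by exactly four, so 4 |A| = n + s + l. These facts are carried
  through the construction as one inductive invariant of the labelling.
*)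

definition nbhd :: "'a set \<Rightarrow> 'a set set \<Rightarrow> 'a \<Rightarrow> 'a set" where
  "nbhd V E v = {u \<in> V. adj E v u}"

lemma adj_sym: "adj E u v \<longleftrightarrow> adj E v u"
  unfolding adj_def by (auto simp: insert_commute)

lemma nbhd_vertex: "u \<in> nbhd V E v \<Longrightarrow> u \<in> V"
  unfolding nbhd_def by simp

lemma nbhd_subset: "nbhd V E v \<subseteq> V"
  unfolding nbhd_def by auto

lemma finite_nbhd: "finite V \<Longrightarrow> finite (nbhd V E v)"
  using nbhd_subset finite_subset by metis

lemma nbhd_sym: "u \<in> nbhd V E v \<Longrightarrow> v \<in> V \<Longrightarrow> v \<in> nbhd V E u"
  unfolding nbhd_def using adj_sym by fastforce

lemma in_nbhd_iff: "u \<in> nbhd V E v \<longleftrightarrow> u \<in> V \<and> adj E v u"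
  unfolding nbhd_def by simp

lemma adj_in_vertices: "\<forall>e\<in>E. e \<subseteq> V \<Longrightarrow> adj E u v \<Longrightarrow> u \<in> V \<and> v \<in> V"
  unfolding adj_def by auto

lemma nbhd_outside: "\<forall>e\<in>E. e \<subseteq> V \<Longrightarrow> z \<notin> V \<Longrightarrow> nbhd V E z = {}"
  unfolding nbhd_def adj_def by blast

lemma nbhd_add_edges:
  assumes "\<forall>e\<in>E. e \<subseteq> V"
  shows "nbhd (V \<union> W) (E \<union> F) z = nbhd V E z \<union> {w \<in> V \<union> W. w \<noteq> z \<and> {z, w} \<in> F}"
  using assms unfolding nbhd_def adj_def by blast

lemma deg_eq_card_nbhd: "deg V E v = card (nbhd V E v)"
  unfolding deg_def nbhd_def by simp

lemma card_nbhd_minus_le1: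
  assumes "finite V" "deg V E w = 2" "y \<in> nbhd V E w"
  shows "card (nbhd V E w - {y}) \<le> 1"
  using assms finite_nbhd[OF assms(1)] by (simp add: deg_eq_card_nbhd)

lemma leaves_eq: "leaves V E = {v \<in> V. card (nbhd V E v) = 1}"
  unfolding leaves_def deg_eq_card_nbhd ..

lemma leaves_subset: "leaves V E \<subseteq> V"
  unfolding leaves_eq by auto

lemma supports_eq: "supports V E = {z \<in> V. nbhd V E z \<inter> leaves V E \<noteq> {}}"
  unfolding supports_def nbhd_def leaves_def by blast

lemma supports_subset: "supports V E \<subseteq> V"
  unfolding supports_def by auto

lemma card_insert_outside: "finite V \<Longrightarrow> X \<subseteq> V \<Longrightarrow> u \<notin> V \<Longrightarrow> card (insert u X) = Suc (card X)"
  by (meson card_insert_disjoint finite_subset subsetD)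

lemma dist2_through_nbhd:
  assumes "dist2 V E c u" "\<forall>e\<in>E. e \<subseteq> V"
  shows "\<exists>m\<in>nbhd V E c. u \<in> nbhd V E m - {c}"
proof -
  obtain m where "m \<in> V" "adj E c m" "adj E m u" "c \<noteq> u"
    using assms(1) unfolding dist2_def by blast
  moreover have "u \<in> V"
    using adj_in_vertices[OF assms(2) \<open>adj E m u\<close>] by simp
  ultimately show ?thesis
    by (auto simp: in_nbhd_iff)
qed

lemma undominated_needs_two_second_nbrs:
  assumes D: "is_2DD V E D" and EV: "\<forall>e\<in>E. e \<subseteq> V"
    and c: "c \<in> V" "c \<notin> D" "nbhd V E c \<inter> D = {}"
    and A: "finite A" "\<And>m u. m \<in> nbhd V E c \<Longrightarrow> u \<in> nbhd V E m - {c} \<Longrightarrow> u \<in> D \<Longrightarrow> u \<in> A"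
  shows "\<not> card A \<le> 1"
proof -
  have "D \<subseteq> V"
    using D unfolding is_2DD_def by simp
  then have "\<not> (\<exists>u\<in>D. adj E c u)"
    using c(3) by (auto simp: nbhd_def)
  moreover have "c \<in> V - D"
    using c(1,2) by simp
  ultimately obtain u w where "u \<in> D" "w \<in> D" "u \<noteq> w" "dist2 V E c u" "dist2 V E c w"
    using D unfolding is_2DD_def by blast
  then have "u \<in> A" "w \<in> A" "u \<noteq> w"
    using A(2) dist2_through_nbhd[OF _ EV] by blast+
  then show ?thesis
    using card_le_Suc0_iff_eq[OF A(1)] by auto
qed

section \<open>Gadgets\<close>

text \<open>The part of the tree private to an A-vertex \<open>x\<close>: a C-leaf \<open>c\<close> at \<open>x\<close>, or a pendant path
  \<open>x c d b\<close>. The degree bound at one end of the path is what operations O2 and O4 must preserve.\<close>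

definition leaf_gadget :: "'a set \<Rightarrow> 'a set set \<Rightarrow> ('a \<Rightarrow> status) \<Rightarrow> 'a \<Rightarrow> 'a \<Rightarrow> bool" where
  "leaf_gadget V E S x c \<longleftrightarrow> c \<in> nbhd V E x \<and> S c = SC \<and> nbhd V E c = {x} \<and>
     card (nbhd V E x - {c}) \<le> 1"

definition path_gadget ::
    "'a set \<Rightarrow> 'a set set \<Rightarrow> ('a \<Rightarrow> status) \<Rightarrow> 'a \<Rightarrow> 'a \<Rightarrow> 'a \<Rightarrow> 'a \<Rightarrow> bool" where
  "path_gadget V E S x c d b \<longleftrightarrow> c \<in> nbhd V E x \<and> S c = SC \<and> nbhd V E c = {x, d} \<and>
     nbhd V E d = {c, b} \<and> S d = SD \<and> S b = SB \<and>
     (card (nbhd V E x - {c}) \<le> 1 \<or> card (nbhd V E b - {d}) \<le> 1)"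

definition has_gadget :: "'a set \<Rightarrow> 'a set set \<Rightarrow> ('a \<Rightarrow> status) \<Rightarrow> 'a \<Rightarrow> bool" where
  "has_gadget V E S x \<longleftrightarrow> (\<exists>c. leaf_gadget V E S x c) \<or> (\<exists>c d b. path_gadget V E S x c d b)"

definition gadget :: "'a set \<Rightarrow> 'a set set \<Rightarrow> ('a \<Rightarrow> status) \<Rightarrow> 'a \<Rightarrow> 'a set" where
  "gadget V E S x = {y. (\<exists>c. leaf_gadget V E S x c \<and> y \<in> {x, c}) \<or>
     (\<exists>c d b. path_gadget V E S x c d b \<and> y \<in> {x, c, d, b})}"

lemma leaf_gadget_subset_gadget: "leaf_gadget V E S x c \<Longrightarrow> {x, c} \<subseteq> gadget V E S x"
  unfolding gadget_def by blast

lemma path_gadget_subset_gadget: "path_gadget V E S x c d b \<Longrightarrow> {x, c, d, b} \<subseteq> gadget V E S x"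
  unfolding gadget_def by blast

lemma leaf_gadget_meets_2DD:
  assumes "leaf_gadget V E S x c" "is_2DD V E D" "finite V" "\<forall>e\<in>E. e \<subseteq> V"
  shows "x \<in> D \<or> c \<in> D"
proof (rule ccontr)
  assume none: "\<not> ?thesis"
  have g: "c \<in> nbhd V E x" "nbhd V E c = {x}" "card (nbhd V E x - {c}) \<le> 1"
    using assms(1) unfolding leaf_gadget_def by blast+
  have "c \<in> V"
    using g(1) by (rule nbhd_vertex)
  have "\<not> card (nbhd V E x - {c}) \<le> 1"
  proof (rule undominated_needs_two_second_nbrs[OF assms(2,4) \<open>c \<in> V\<close>])
    fix m u assume "m \<in> nbhd V E c" "u \<in> nbhd V E m - {c}"
    then show "u \<in> nbhd V E x - {c}"
      using g(2) by simp
  qed (use none g(2) assms(3) finite_nbhd in simp_all)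
  then show False
    using g(3) by simp
qed

text \<open>If no vertex of the path \<open>x c d b\<close> is in \<open>D\<close>, then \<open>c\<close> needs two vertices of \<open>D\<close>
  in \<open>N(x) - {c}\<close> and \<open>d\<close> needs two in \<open>N(b) - {d}\<close>; the degree bound forbids one of them.\<close>

lemma path_gadget_meets_2DD:
  assumes "path_gadget V E S x c d b" "is_2DD V E D" "finite V" "\<forall>e\<in>E. e \<subseteq> V"
  shows "x \<in> D \<or> c \<in> D \<or> d \<in> D \<or> b \<in> D"
proof (rule ccontr)
  assume none: "\<not> ?thesis"
  have g: "c \<in> nbhd V E x" "nbhd V E c = {x, d}" "nbhd V E d = {c, b}"
    "card (nbhd V E x - {c}) \<le> 1 \<or> card (nbhd V E b - {d}) \<le> 1"
    using assms(1) unfolding path_gadget_def by auto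
  have "c \<in> V"
    using g(1) by (rule nbhd_vertex)
  have "d \<in> V"
    using g(2) nbhd_vertex[of d V E c] by simp
  have "\<not> card (nbhd V E x - {c}) \<le> 1"
  proof (rule undominated_needs_two_second_nbrs[OF assms(2,4) \<open>c \<in> V\<close>])
    fix m u assume "m \<in> nbhd V E c" "u \<in> nbhd V E m - {c}" "u \<in> D"
    then show "u \<in> nbhd V E x - {c}"
      using g(2,3) none by auto
  qed (use none g(2) assms(3) finite_nbhd in simp_all)
  moreover have "\<not> card (nbhd V E b - {d}) \<le> 1"
  proof (rule undominated_needs_two_second_nbrs[OF assms(2,4) \<open>d \<in> V\<close>])
    fix m u assume "m \<in> nbhd V E d" "u \<in> nbhd V E m - {d}" "u \<in> D"
    then show "u \<in> nbhd V E b - {d}"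
      using g(2,3) none by auto
  qed (use none g(3) assms(3) finite_nbhd in simp_all)
  ultimately show False
    using g(4) by simp
qed

lemma gadget_meets_2DD:
  assumes "has_gadget V E S x" "is_2DD V E D" "finite V" "\<forall>e\<in>E. e \<subseteq> V"
  shows "gadget V E S x \<inter> D \<noteq> {}"
  using assms(1) unfolding has_gadget_def
proof (elim disjE exE)
  fix c assume "leaf_gadget V E S x c"
  then show ?thesis
    using leaf_gadget_meets_2DD[OF _ assms(2-4)] leaf_gadget_subset_gadget by fastforce
next
  fix c d b assume "path_gadget V E S x c d b"
  then show ?thesis
    using path_gadget_meets_2DD[OF _ assms(2-4)] path_gadget_subset_gadget by fastforce
qed

section \<open>The labelling invariant\<close>

definition at_most_one_nbr :: "'a set \<Rightarrow> 'a set set \<Rightarrow> ('a \<Rightarrow> status) \<Rightarrow> status \<Rightarrow> 'a \<Rightarrow> bool" where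
  "at_most_one_nbr V E S s z \<longleftrightarrow>
     (\<forall>y1\<in>nbhd V E z. \<forall>y2\<in>nbhd V E z. S y1 = s \<longrightarrow> S y2 = s \<longrightarrow> y1 = y2)"

definition consistent_at :: "'a set \<Rightarrow> 'a set set \<Rightarrow> ('a \<Rightarrow> status) \<Rightarrow> 'a \<Rightarrow> bool" where
  "consistent_at V E S z \<longleftrightarrow>
     (case S z of
        SA \<Rightarrow> at_most_one_nbr V E S SC z \<and> has_gadget V E S z
      | SB \<Rightarrow> (\<exists>a\<in>nbhd V E z. S a = SA) \<and> at_most_one_nbr V E S SD z
      | SC \<Rightarrow> (\<exists>a\<in>nbhd V E z. S a = SA)
      | SD \<Rightarrow> (\<exists>c b x a. nbhd V E z = {c, b} \<and> S c = SC \<and> S b = SB \<and>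
               x \<in> nbhd V E c \<and> a \<in> nbhd V E b \<and> S x = SA \<and> S a = SA \<and> x \<noteq> a)) \<and>
     (S z \<noteq> SC \<longrightarrow> 2 \<le> card (nbhd V E z))"

lemma consistent_at_A:
  "consistent_at V E S x \<Longrightarrow> S x = SA \<Longrightarrow> at_most_one_nbr V E S SC x \<and> has_gadget V E S x"
  unfolding consistent_at_def by simp

lemma consistent_at_B:
  "consistent_at V E S b \<Longrightarrow> S b = SB \<Longrightarrow> (\<exists>a\<in>nbhd V E b. S a = SA) \<and> at_most_one_nbr V E S SD b"
  unfolding consistent_at_def by simp

lemma consistent_at_C: "consistent_at V E S c \<Longrightarrow> S c = SC \<Longrightarrow> \<exists>a\<in>nbhd V E c. S a = SA"
  unfolding consistent_at_def by simp

lemma consistent_at_D: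
  "consistent_at V E S d \<Longrightarrow> S d = SD \<Longrightarrow> \<exists>c b x a. nbhd V E d = {c, b} \<and> S c = SC \<and> S b = SB \<and>
     x \<in> nbhd V E c \<and> a \<in> nbhd V E b \<and> S x = SA \<and> S a = SA \<and> x \<noteq> a"
  unfolding consistent_at_def by simp

lemma consistent_at_degree: "consistent_at V E S z \<Longrightarrow> S z \<noteq> SC \<Longrightarrow> 2 \<le> card (nbhd V E z)"
  unfolding consistent_at_def by simp

lemma leaf_labelled_C:
  assumes ok: "\<forall>z\<in>V. consistent_at V E S z" and l: "l \<in> leaves V E"
  shows "S l = SC"
proof (rule ccontr)
  assume "S l \<noteq> SC"
  moreover have "l \<in> V" "card (nbhd V E l) = 1"
    using l by (auto simp: leaves_eq)
  ultimately show False
    using consistent_at_degree[OF bspec[OF ok \<open>l \<in> V\<close>]] by simp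
qed

lemma D_vertex_sees_two_A_vertices:
  assumes ok: "consistent_at V E S v" and D: "S v = SD"
  obtains x a where "x \<in> V" "a \<in> V" "S x = SA" "S a = SA" "x \<noteq> a"
    "dist2 V E v x" "dist2 V E v a"
proof -
  obtain c b x a where h: "nbhd V E v = {c, b}" "S c = SC" "S b = SB"
    "x \<in> nbhd V E c" "a \<in> nbhd V E b" "S x = SA" "S a = SA" "x \<noteq> a"
    using consistent_at_D[OF ok D] by blast
  have "dist2 V E v y" if y: "y \<in> nbhd V E m" "m \<in> {c, b}" "S y = SA" for m y
    unfolding dist2_def
  proof (intro conjI)
    show "v \<noteq> y"
      using D y(3) by auto
    have "y \<notin> nbhd V E v"
      using h(1-3) y(3) by auto
    then show "\<not> adj E v y"
      using nbhd_vertex[OF y(1)] by (simp add: in_nbhd_iff)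
    have "m \<in> nbhd V E v"
      using h(1) y(2) by simp
    then show "\<exists>w\<in>V. adj E v w \<and> adj E w y"
      using y(1) by (auto simp: in_nbhd_iff)
  qed
  then have "dist2 V E v x" "dist2 V E v a"
    using h(4-7) by blast+
  then show thesis
    using that nbhd_vertex[OF h(4)] nbhd_vertex[OF h(5)] h(6-8) by blast
qed

lemma A_vertices_2DD:
  assumes ok: "\<forall>z\<in>V. consistent_at V E S z"
  shows "is_2DD V E {x \<in> V. S x = SA}"
  unfolding is_2DD_def
proof (intro conjI ballI)
  fix v assume v: "v \<in> V - {x \<in> V. S x = SA}"
  let ?A = "{x \<in> V. S x = SA}"
  have ok_v: "consistent_at V E S v"
    using v ok by blast
  show "(\<exists>u\<in>?A. adj E v u) \<or> (\<exists>u\<in>?A. \<exists>w\<in>?A. u \<noteq> w \<and> dist2 V E v u \<and> dist2 V E v w)"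
  proof (cases "S v = SD")
    case False
    have "S v = SB \<or> S v = SC"
      using v False by (cases "S v") auto
    then obtain a where "a \<in> nbhd V E v" "S a = SA"
      using consistent_at_B[OF ok_v] consistent_at_C[OF ok_v] by blast
    then show ?thesis
      by (auto simp: in_nbhd_iff)
  next
    case True
    obtain x a where "x \<in> ?A" "a \<in> ?A" "x \<noteq> a" "dist2 V E v x" "dist2 V E v a"
      using D_vertex_sees_two_A_vertices[OF ok_v True] by blast
    then show ?thesis
      by blast
  qed
qed simp

lemma gadget_memberE:
  assumes "y \<in> gadget V E S x"
  obtains (leaf) c where "leaf_gadget V E S x c" "y \<in> {x, c}"
    | (path) c d b where "path_gadget V E S x c d b" "y \<in> {x, c, d, b}"
  using assms unfolding gadget_def by blast

lemma gadget_vertex_A: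
  assumes "y \<in> gadget V E S x" "S y = SA"
  shows "y = x"
  using assms(1)
proof (cases rule: gadget_memberE)
  case (leaf c)
  then have "S c = SC"
    unfolding leaf_gadget_def by blast
  then show ?thesis
    using leaf(2) assms(2) by auto
next
  case (path c d b)
  then have "S c = SC" "S d = SD" "S b = SB"
    unfolding path_gadget_def by blast+
  then show ?thesis
    using path(2) assms(2) by auto
qed

lemma gadget_vertex_C:
  assumes "y \<in> gadget V E S x" "S x = SA" "S y = SC"
  shows "y \<in> nbhd V E x \<and> (\<forall>z\<in>nbhd V E y. S z \<noteq> SD \<longrightarrow> z = x)"
  using assms(1)
proof (cases rule: gadget_memberE)
  case (leaf c)
  then have "y = c"
    using assms(2,3) by auto
  then show ?thesis
    using leaf(1) unfolding leaf_gadget_def by simp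
next
  case (path c d b)
  then have "S d = SD" "S b = SB"
    unfolding path_gadget_def by blast+
  then have "y = c"
    using path(2) assms(2,3) by auto
  then show ?thesis
    using path(1) unfolding path_gadget_def by auto
qed

lemma gadget_vertex_D:
  assumes "y \<in> gadget V E S x" "S x = SA" "S y = SD"
  shows "\<exists>c b. nbhd V E y = {c, b} \<and> S c = SC \<and> S b = SB \<and> c \<in> gadget V E S x"
  using assms(1)
proof (cases rule: gadget_memberE)
  case (leaf c)
  then have False
    using assms(2,3) unfolding leaf_gadget_def by auto
  then show ?thesis ..
next
  case (path c d b)
  have "c \<in> gadget V E S x"
    using path_gadget_subset_gadget[OF path(1)] by blast
  moreover have "y = d"
    using path assms(2,3) unfolding path_gadget_def by auto
  ultimately show ?thesis
    using path(1) unfolding path_gadget_def by blast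
qed

lemma gadget_vertex_B:
  assumes "y \<in> gadget V E S x" "S x = SA" "S y = SB"
  shows "\<exists>d. d \<in> nbhd V E y \<and> S d = SD \<and> d \<in> gadget V E S x \<and> y \<in> V"
  using assms(1)
proof (cases rule: gadget_memberE)
  case (leaf c)
  then have False
    using assms(2,3) unfolding leaf_gadget_def by auto
  then show ?thesis ..
next
  case (path c d b)
  have "d \<in> gadget V E S x"
    using path_gadget_subset_gadget[OF path(1)] by blast
  moreover have "y = b" "nbhd V E d = {c, b}" "S d = SD" "nbhd V E c = {x, d}"
    using path assms(2,3) unfolding path_gadget_def by auto
  ultimately have g: "y = b" "d \<in> gadget V E S x" "nbhd V E d = {c, b}" "S d = SD"
      "nbhd V E c = {x, d}"
    by blast+
  have "d \<in> V" "y \<in> V"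
    using g nbhd_vertex[of d V E c] nbhd_vertex[of b V E d] by auto
  then have "d \<in> nbhd V E y"
    using g(1,3) nbhd_sym[of y V E d] by simp
  then show ?thesis
    using g(2,4) \<open>y \<in> V\<close> by blast
qed

lemma gadgets_meeting_in_C:
  assumes "c \<in> gadget V E S x1" "c \<in> gadget V E S x2" "S c = SC"
    and "x2 \<in> V" "S x1 = SA" "S x2 = SA"
  shows "x1 = x2"
proof -
  have "c \<in> nbhd V E x2"
    using gadget_vertex_C[OF assms(2,6,3)] by blast
  then have "x2 \<in> nbhd V E c"
    using assms(4) by (rule nbhd_sym)
  then show ?thesis
    using gadget_vertex_C[OF assms(1,5,3)] assms(6) by auto
qed

lemma gadgets_meeting_in_D:
  assumes "d \<in> gadget V E S x1" "d \<in> gadget V E S x2" "S d = SD"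
    and "x2 \<in> V" "S x1 = SA" "S x2 = SA"
  shows "x1 = x2"
proof -
  obtain c1 b1 where 1: "nbhd V E d = {c1, b1}" "S c1 = SC" "S b1 = SB" "c1 \<in> gadget V E S x1"
    using gadget_vertex_D[OF assms(1,5,3)] by blast
  obtain c2 b2 where 2: "nbhd V E d = {c2, b2}" "S c2 = SC" "c2 \<in> gadget V E S x2"
    using gadget_vertex_D[OF assms(2,6,3)] by blast
  have "c2 \<in> {c1, b1}"
    using 1(1) 2(1) by (metis insertI1)
  then have "c1 = c2"
    using 1(3) 2(2) by auto
  then show ?thesis
    using gadgets_meeting_in_C[OF 1(4) _ 1(2) assms(4-6)] 2(3) by blast
qed

text \<open>A vertex shared by two gadgets is traced back, through its unique neighbours of the
  preceding status (B to D to C), to the C-vertex of the gadget, whose only non-D neighbour is the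
  root.\<close>
lemma gadgets_disjoint:
  assumes ok: "\<forall>z\<in>V. consistent_at V E S z" and x: "x2 \<in> V" "S x1 = SA" "S x2 = SA"
    and y: "y \<in> gadget V E S x1" "y \<in> gadget V E S x2"
  shows "x1 = x2"
proof (cases "S y")
  case SA
  then show ?thesis
    using gadget_vertex_A[OF y(1)] gadget_vertex_A[OF y(2)] by simp
next
  case SB
  obtain d1 where 1: "d1 \<in> nbhd V E y" "S d1 = SD" "d1 \<in> gadget V E S x1" "y \<in> V"
    using gadget_vertex_B[OF y(1) x(2) SB] by blast
  obtain d2 where 2: "d2 \<in> nbhd V E y" "S d2 = SD" "d2 \<in> gadget V E S x2"
    using gadget_vertex_B[OF y(2) x(3) SB] by blast
  have "at_most_one_nbr V E S SD y"
    using consistent_at_B[OF bspec[OF ok 1(4)] SB] by blast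
  then have "d1 = d2"
    using 1(1,2) 2(1,2) unfolding at_most_one_nbr_def by blast
  then show ?thesis
    using gadgets_meeting_in_D[OF 1(3) _ 1(2) x] 2(3) by blast
next
  case SC
  show ?thesis
    using gadgets_meeting_in_C[OF y SC x] .
next
  case SD
  show ?thesis
    using gadgets_meeting_in_D[OF y SD x] .
qed

lemma card_A_vertices_le_2DD:
  assumes fin: "finite V" and EV: "\<forall>e\<in>E. e \<subseteq> V" and ok: "\<forall>z\<in>V. consistent_at V E S z"
    and D: "is_2DD V E D"
  shows "card {x \<in> V. S x = SA} \<le> card D"
proof -
  let ?A = "{x \<in> V. S x = SA}"
  have "\<exists>y. y \<in> gadget V E S x \<inter> D" if "x \<in> ?A" for x
  proof -
    have "consistent_at V E S x" "S x = SA"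
      using ok that by auto
    then have "has_gadget V E S x"
      by (simp add: consistent_at_A)
    then show ?thesis
      using gadget_meets_2DD[OF _ D fin EV] by blast
  qed
  then obtain f where f: "\<And>x. x \<in> ?A \<Longrightarrow> f x \<in> gadget V E S x \<inter> D"
    by metis
  have "inj_on f ?A"
  proof (rule inj_onI)
    fix x1 x2 assume x: "x1 \<in> ?A" "x2 \<in> ?A" "f x1 = f x2"
    then have y: "f x1 \<in> gadget V E S x1" "f x1 \<in> gadget V E S x2"
      using f[OF x(1)] f[OF x(2)] by auto
    show "x1 = x2"
      by (rule gadgets_disjoint[OF ok _ _ _ y]) (use x in auto)
  qed
  moreover have "f ` ?A \<subseteq> D"
    using f by blast
  moreover have "finite D"
    using D fin finite_subset unfolding is_2DD_def by auto
  ultimately show ?thesis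
    by (rule card_inj_on_le)
qed

lemma gamma2d_eq_card_A_vertices:
  assumes "finite V" "\<forall>e\<in>E. e \<subseteq> V" "\<forall>z\<in>V. consistent_at V E S z"
  shows "gamma2d V E = card {x \<in> V. S x = SA}"
  unfolding gamma2d_def
proof (rule Least_equality)
  show "\<exists>D. is_2DD V E D \<and> card D = card {x \<in> V. S x = SA}"
    using A_vertices_2DD[OF assms(3)] by blast
next
  fix k assume "\<exists>D. is_2DD V E D \<and> card D = k"
  then show "card {x \<in> V. S x = SA} \<le> k"
    using card_A_vertices_le_2DD[OF assms] by blast
qed

definition labelling_invariant :: "'a set \<Rightarrow> 'a set set \<Rightarrow> ('a \<Rightarrow> status) \<Rightarrow> bool" where
  "labelling_invariant V E S \<longleftrightarrow> finite V \<and> (\<forall>e\<in>E. e \<subseteq> V) \<and> (\<forall>z\<in>V. consistent_at V E S z) \<and>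
     4 * card {x \<in> V. S x = SA} = card V + card (supports V E) + card (leaves V E)"

lemma labelling_invariantD:
  assumes "labelling_invariant V E S"
  shows "finite V" "\<forall>e\<in>E. e \<subseteq> V" "\<forall>z\<in>V. consistent_at V E S z"
    "4 * card {x \<in> V. S x = SA} = card V + card (supports V E) + card (leaves V E)"
  using assms unfolding labelling_invariant_def by blast+

lemma gamma2d_from_labelling_invariant:
  assumes "labelling_invariant V E S"
  shows "real (gamma2d V E) =
         (real (card V) + real (card (supports V E)) + real (card (leaves V E))) / 4"
proof -
  have "gamma2d V E = card {x \<in> V. S x = SA}"
    using assms unfolding labelling_invariant_def by (intro gamma2d_eq_card_A_vertices) auto
  moreover have "4 * card {x \<in> V. S x = SA} = card V + card (supports V E) + card (leaves V E)"
    using assms unfolding labelling_invariant_def by blast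
  ultimately show ?thesis
    by (metis (mono_tags) of_nat_add of_nat_mult of_nat_numeral nonzero_mult_div_cancel_left
        zero_neq_numeral)
qed

section \<open>The operations preserve the invariant\<close>

text \<open>In O2 and O4 the corresponding vertex of degree two is the far end of the pendant path of
  a gadget, so attaching the new path at the other end keeps the degree bound of the gadget.\<close>

lemma corr_of_B_is_gadget_root:
  assumes EV: "\<forall>e\<in>E. e \<subseteq> V" and g: "path_gadget V E S x c d b"
    and one_D: "at_most_one_nbr V E S SD b" and corr: "corr_of_B V E S b w"
  shows "w = x"
proof -
  have g': "nbhd V E c = {x, d}" "nbhd V E d = {c, b}" "S d = SD"
    using g unfolding path_gadget_def by blast+
  obtain v1 v2 where p: "induced_P4 E w v1 v2 b" "S v2 = SD"
    using corr unfolding corr_of_B_def by blast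
  then have p': "distinct [w, v1, v2, b]" "adj E w v1" "adj E v1 v2" "adj E v2 b"
    unfolding induced_P4_def by auto
  have V: "w \<in> V" "v1 \<in> V" "v2 \<in> V" "b \<in> V"
    using adj_in_vertices[OF EV p'(2)] adj_in_vertices[OF EV p'(4)] by auto
  have "d \<in> V"
    using g'(1) nbhd_vertex[of d V E c] by simp
  then have "d \<in> nbhd V E b"
    using g'(2) nbhd_sym[of b V E d] by simp
  moreover have "v2 \<in> nbhd V E b"
    using p'(4) V(3) by (simp add: in_nbhd_iff adj_sym)
  ultimately have "v2 = d"
    using one_D p(2) g'(3) unfolding at_most_one_nbr_def by blast
  have "v1 \<in> nbhd V E v2"
    using p'(3) V(2) by (simp add: in_nbhd_iff adj_sym)
  then have "v1 = c"
    using p'(1) g'(2) \<open>v2 = d\<close> by auto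
  have "w \<in> nbhd V E v1"
    using p'(2) V(1) by (simp add: in_nbhd_iff adj_sym)
  then show "w = x"
    using p'(1) g'(1) \<open>v1 = c\<close> \<open>v2 = d\<close> by auto
qed

lemma corr_of_A_second_nbr:
  assumes EV: "\<forall>e\<in>E. e \<subseteq> V" and one_C: "at_most_one_nbr V E S SC x"
    and c: "c \<in> nbhd V E x" "S c = SC" and corr: "corr_of_A V E S P x w"
  shows "\<exists>d. d \<in> nbhd V E c - {x} \<and> w \<in> nbhd V E d - {c}"
proof -
  obtain v1 v2 where p: "induced_P4 E x v1 v2 w" "S v1 = SC"
    using corr unfolding corr_of_A_def by blast
  then have p': "distinct [x, v1, v2, w]" "adj E x v1" "adj E v1 v2" "adj E v2 w"
    unfolding induced_P4_def by auto
  have V: "v1 \<in> V" "v2 \<in> V" "w \<in> V"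
    using adj_in_vertices[OF EV p'(3)] adj_in_vertices[OF EV p'(4)] by auto
  have "v1 = c"
    using one_C c p(2) p'(2) V(1) unfolding at_most_one_nbr_def by (auto simp: in_nbhd_iff)
  then show ?thesis
    using p' V by (auto simp: in_nbhd_iff)
qed

lemma corr_of_A_not_leaf_gadget:
  assumes "\<forall>e\<in>E. e \<subseteq> V" "at_most_one_nbr V E S SC x" "leaf_gadget V E S x c"
  shows "\<not> corr_of_A V E S P x w"
  using corr_of_A_second_nbr[OF assms(1,2)] assms(3) unfolding leaf_gadget_def by auto

lemma corr_of_A_is_gadget_end:
  assumes "\<forall>e\<in>E. e \<subseteq> V" "at_most_one_nbr V E S SC x" "path_gadget V E S x c d b"
    "corr_of_A V E S P x w"
  shows "w = b"
  using corr_of_A_second_nbr[OF assms(1,2) _ _ assms(4)] assms(3)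
  unfolding path_gadget_def by auto

text \<open>The common shape of O2, O3 and O4: the new vertices hang off a single old vertex \<open>v\<close>
  through one new neighbour \<open>u\<close>.\<close>

locale attachment =
  fixes V :: "'a set" and E :: "'a set set" and S :: "'a \<Rightarrow> status"
    and V' :: "'a set" and E' :: "'a set set" and S' :: "'a \<Rightarrow> status" and v u :: 'a
  assumes finite_new: "finite V'" and old_subset: "V \<subseteq> V'"
    and v_old: "v \<in> V" and u_new: "u \<in> V'" "u \<notin> V"
    and nbhd_old: "\<And>z. z \<in> V \<Longrightarrow> z \<noteq> v \<Longrightarrow> nbhd V' E' z = nbhd V E z"
    and nbhd_v: "nbhd V' E' v = insert u (nbhd V E v)"
    and label_old: "\<And>z. z \<in> V \<Longrightarrow> S' z = S z"
    and label_u: "S' u \<noteq> SC"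
    and label_v: "S v \<noteq> SD"
    and no_second_D: "S v = SB \<Longrightarrow> S' u \<noteq> SD"
begin

lemma nbhd_mono: "z \<in> V \<Longrightarrow> nbhd V E z \<subseteq> nbhd V' E' z"
  using nbhd_old nbhd_v by (cases "z = v") auto

lemma nbhd_new_subset: "z \<in> V \<Longrightarrow> nbhd V' E' z \<subseteq> insert u (nbhd V E z)"
  using nbhd_old nbhd_v by (cases "z = v") auto

lemma u_notin_nbhd: "u \<notin> nbhd V E z"
  using u_new(2) nbhd_vertex by metis

lemma card_nbhd_v: "finite V \<Longrightarrow> card (nbhd V' E' v) = Suc (card (nbhd V E v))"
  unfolding nbhd_v by (rule card_insert_disjoint[OF finite_nbhd u_notin_nbhd])

lemma A_nbr_old:
  assumes "z \<in> V" "\<exists>a\<in>nbhd V E z. S a = SA"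
  shows "\<exists>a\<in>nbhd V' E' z. S' a = SA"
  using assms nbhd_mono[OF assms(1)] label_old nbhd_vertex by (metis subsetD)

lemma at_most_one_nbr_old:
  assumes "z \<in> V" "at_most_one_nbr V E S s z" "z = v \<Longrightarrow> S' u \<noteq> s"
  shows "at_most_one_nbr V' E' S' s z"
  unfolding at_most_one_nbr_def
proof (intro ballI impI)
  fix y1 y2 assume y: "y1 \<in> nbhd V' E' z" "y2 \<in> nbhd V' E' z" "S' y1 = s" "S' y2 = s"
  have "y1 \<in> nbhd V E z" "y2 \<in> nbhd V E z"
    using y nbhd_new_subset[OF assms(1)] assms(3) nbhd_old[OF assms(1)] by auto
  moreover have "S y1 = s" "S y2 = s"
    using y(3,4) label_old nbhd_vertex calculation by metis+
  ultimately show "y1 = y2"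
    using assms(2) unfolding at_most_one_nbr_def by blast
qed

lemma leaf_gadget_old:
  assumes "leaf_gadget V E S x c" "x \<in> V" "x \<noteq> v" "c \<noteq> v"
  shows "leaf_gadget V' E' S' x c"
proof -
  have "c \<in> V"
    using assms(1) nbhd_vertex unfolding leaf_gadget_def by metis
  then show ?thesis
    using assms(1) unfolding leaf_gadget_def nbhd_old[OF assms(2,3)]
      nbhd_old[OF \<open>c \<in> V\<close> assms(4)] label_old[OF \<open>c \<in> V\<close>] by blast
qed

lemma path_gadget_old:
  assumes g: "path_gadget V E S x c d b" and x: "x \<in> V" and cd: "c \<noteq> v" "d \<noteq> v"
    and bound: "(x \<noteq> v \<and> card (nbhd V E x - {c}) \<le> 1) \<or> (b \<noteq> v \<and> card (nbhd V E b - {d}) \<le> 1)"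
  shows "path_gadget V' E' S' x c d b"
proof -
  have g': "c \<in> nbhd V E x" "nbhd V E c = {x, d}" "nbhd V E d = {c, b}"
    "S c = SC" "S d = SD" "S b = SB"
    using g unfolding path_gadget_def by blast+
  have V: "c \<in> V" "d \<in> V" "b \<in> V"
    using g'(1-3) nbhd_vertex by (metis insertI1 insertI2)+
  have "card (nbhd V' E' x - {c}) \<le> 1 \<or> card (nbhd V' E' b - {d}) \<le> 1"
    using bound nbhd_old x V(3) by auto
  then show ?thesis
    using g' V cd nbhd_mono[OF x] nbhd_old label_old unfolding path_gadget_def by auto
qed

lemma D_condition_old:
  assumes z: "z \<in> V" and ok: "consistent_at V E S z" and D: "S z = SD"
  shows "\<exists>c b x a. nbhd V' E' z = {c, b} \<and> S' c = SC \<and> S' b = SB \<and>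
    x \<in> nbhd V' E' c \<and> a \<in> nbhd V' E' b \<and> S' x = SA \<and> S' a = SA \<and> x \<noteq> a"
proof -
  obtain c b x a where h: "nbhd V E z = {c, b}" "S c = SC" "S b = SB"
    "x \<in> nbhd V E c" "a \<in> nbhd V E b" "S x = SA" "S a = SA" "x \<noteq> a"
    using consistent_at_D[OF ok D] by blast
  have V: "c \<in> V" "b \<in> V" "x \<in> V" "a \<in> V"
    using h(1,4,5) nbhd_vertex by (metis insertI1 insertI2)+
  have "z \<noteq> v"
    using D label_v by auto
  then have "nbhd V' E' z = {c, b}" "x \<in> nbhd V' E' c" "a \<in> nbhd V' E' b"
    using h nbhd_old[OF z] nbhd_mono[OF V(1)] nbhd_mono[OF V(2)] by auto
  moreover have "S' c = SC" "S' b = SB" "S' x = SA" "S' a = SA"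
    using h V label_old by auto
  ultimately show ?thesis
    using h(8) by blast
qed

lemma consistent_at_old:
  assumes z: "z \<in> V" and ok: "consistent_at V E S z"
    and gadget: "S z = SA \<Longrightarrow> has_gadget V' E' S' z"
  shows "consistent_at V' E' S' z"
proof -
  have label: "S' z = S z"
    using label_old[OF z] .
  have degree: "2 \<le> card (nbhd V' E' z)" if "S z \<noteq> SC"
    using consistent_at_degree[OF ok that] card_mono[OF finite_nbhd[OF finite_new] nbhd_mono[OF z]]
    by linarith
  have "consistent_at V' E' S' z" if "S z = SA"
    using consistent_at_A[OF ok that] at_most_one_nbr_old[OF z] label_u gadget degree label that
    unfolding consistent_at_def by auto
  moreover have "consistent_at V' E' S' z" if "S z = SB"
    using consistent_at_B[OF ok that] A_nbr_old[OF z] at_most_one_nbr_old[OF z] no_second_D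
      degree label that
    unfolding consistent_at_def by auto
  moreover have "consistent_at V' E' S' z" if "S z = SC"
    using consistent_at_C[OF ok that] A_nbr_old[OF z] label that unfolding consistent_at_def by auto
  moreover have "consistent_at V' E' S' z" if "S z = SD"
    using D_condition_old[OF z ok that] degree label that unfolding consistent_at_def by simp
  ultimately show ?thesis
    by (cases "S z") auto
qed

lemma leaf_iff_old: "z \<in> V \<Longrightarrow> z \<noteq> v \<Longrightarrow> z \<in> leaves V' E' \<longleftrightarrow> z \<in> leaves V E"
  using nbhd_old old_subset by (auto simp: leaves_eq)

lemma support_iff_old:
  assumes z: "z \<in> V" and not_leaf: "u \<notin> leaves V' E'" "v \<notin> leaves V' E'"
  shows "z \<in> supports V' E' \<longleftrightarrow> nbhd V E z \<inter> (leaves V E - {v}) \<noteq> {}"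
proof -
  have "nbhd V' E' z \<inter> leaves V' E' = nbhd V E z \<inter> (leaves V E - {v})"
  proof (intro equalityI subsetI)
    fix w assume w: "w \<in> nbhd V' E' z \<inter> leaves V' E'"
    then have "w \<in> nbhd V E z"
      using nbhd_new_subset[OF z] not_leaf(1) by auto
    moreover have "w \<noteq> v"
      using w not_leaf(2) by auto
    moreover have "w \<in> leaves V E"
      using w leaf_iff_old[OF nbhd_vertex[OF \<open>w \<in> nbhd V E z\<close>] \<open>w \<noteq> v\<close>] by blast
    ultimately show "w \<in> nbhd V E z \<inter> (leaves V E - {v})"
      by blast
  next
    fix w assume w: "w \<in> nbhd V E z \<inter> (leaves V E - {v})"
    then show "w \<in> nbhd V' E' z \<inter> leaves V' E'"
      using nbhd_mono[OF z] leaf_iff_old[OF nbhd_vertex] by blast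
  qed
  then show ?thesis
    using z old_subset by (auto simp: supports_eq)
qed

end

text \<open>Operations O2 (\<open>v\<close> a B-vertex) and O4 (\<open>v\<close> an A-vertex) attach the same path.\<close>

locale pendant_extension =
  fixes V :: "'a set" and E :: "'a set set" and S :: "'a \<Rightarrow> status" and P :: "'a set"
    and v u1 u2 :: 'a
  assumes inv: "labelling_invariant V E S"
    and v: "v \<in> V" and new: "u1 \<notin> V" "u2 \<notin> V" "u1 \<noteq> u2"
    and corr: "(S v = SB \<and> (\<exists>w\<in>V. corr_of_B V E S v w \<and> deg V E w = 2)) \<or>
               (S v = SA \<and> (\<exists>w\<in>V. corr_of_A V E S P v w \<and> deg V E w = 2))"
begin

definition "V' = V \<union> {u1, u2}"
definition "E' = E \<union> {{u1, u2}, {u1, v}}"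
definition "S' = S(u1 := SA, u2 := SC)"

lemmas fin = labelling_invariantD(1)[OF inv]
  and EV = labelling_invariantD(2)[OF inv]
  and ok = labelling_invariantD(3)[OF inv]
  and count = labelling_invariantD(4)[OF inv]

lemma nbhd_new: "nbhd V' E' z = nbhd V E z \<union> {w \<in> V'. w \<noteq> z \<and> {z, w} \<in> {{u1, u2}, {u1, v}}}"
  unfolding V'_def E'_def by (rule nbhd_add_edges[OF EV])

lemma in_V': "z \<in> V' \<longleftrightarrow> z \<in> V \<or> z = u1 \<or> z = u2"
  unfolding V'_def by blast

lemma labels_new: "S' u1 = SA" "S' u2 = SC" "z \<in> V \<Longrightarrow> S' z = S z"
  using new unfolding S'_def by auto

lemma nbhd_u1: "nbhd V' E' u1 = {u2, v}"
  using new v nbhd_outside[OF EV new(1)] unfolding nbhd_new by (auto simp: V'_def doubleton_eq_iff)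

lemma nbhd_u2: "nbhd V' E' u2 = {u1}"
  using new v nbhd_outside[OF EV new(2)] unfolding nbhd_new by (auto simp: V'_def doubleton_eq_iff)

sublocale attachment V E S V' E' S' v u1
proof
  show "nbhd V' E' z = nbhd V E z" if "z \<in> V" "z \<noteq> v" for z
    using that new unfolding nbhd_new by (auto simp: V'_def doubleton_eq_iff)
  show "nbhd V' E' v = insert u1 (nbhd V E v)"
    using v new unfolding nbhd_new by (auto simp: V'_def doubleton_eq_iff)
qed (use fin v new corr labels_new in \<open>auto simp: V'_def\<close>)

lemma path_gadget_bound_new:
  assumes x: "x \<in> V" "S x = SA" and one_C: "at_most_one_nbr V E S SC x"
    and path: "path_gadget V E S x c d b"
  shows "(x \<noteq> v \<and> card (nbhd V E x - {c}) \<le> 1) \<or> (b \<noteq> v \<and> card (nbhd V E b - {d}) \<le> 1)"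
proof -
  have g: "c \<in> nbhd V E x" "nbhd V E c = {x, d}" "nbhd V E d = {c, b}" "S b = SB"
    "card (nbhd V E x - {c}) \<le> 1 \<or> card (nbhd V E b - {d}) \<le> 1"
    using path unfolding path_gadget_def by blast+
  have "b \<in> V" "d \<in> V"
    using g(2,3) nbhd_vertex by (metis insertI1 insertI2)+
  then have "d \<in> nbhd V E b"
    using g(3) nbhd_sym[of b V E d] by simp
  consider "x = v" | "b = v" | "x \<noteq> v" "b \<noteq> v"
    by blast
  then show ?thesis
  proof cases
    case 1
    then obtain w where "corr_of_A V E S P x w" "deg V E w = 2"
      using corr x(2) by auto
    then have "card (nbhd V E b - {d}) \<le> 1"
      using corr_of_A_is_gadget_end[OF EV one_C path] card_nbhd_minus_le1[OF fin]
        \<open>d \<in> nbhd V E b\<close> by blast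
    then show ?thesis
      using 1 x(2) g(4) by auto
  next
    case 2
    then obtain w where "corr_of_B V E S b w" "deg V E w = 2"
      using corr g(4) by auto
    moreover have "at_most_one_nbr V E S SD b"
      using consistent_at_B[OF bspec[OF ok \<open>b \<in> V\<close>] g(4)] by blast
    ultimately have "card (nbhd V E x - {c}) \<le> 1"
      using corr_of_B_is_gadget_root[OF EV path] card_nbhd_minus_le1[OF fin] g(1) by blast
    then show ?thesis
      using 2 x(2) g(4) by auto
  next
    case 3
    then show ?thesis
      using g(5) by blast
  qed
qed

lemma has_gadget_old:
  assumes x: "x \<in> V" "S x = SA"
  shows "has_gadget V' E' S' x"
proof -
  have one_C: "at_most_one_nbr V E S SC x" and "has_gadget V E S x"
    using consistent_at_A[OF bspec[OF ok x(1)] x(2)] by blast+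
  then consider (leaf) c where "leaf_gadget V E S x c" | (path) c d b where "path_gadget V E S x c d b"
    unfolding has_gadget_def by blast
  then show ?thesis
  proof cases
    case (leaf c)
    have "x \<noteq> v"
      using corr x(2) corr_of_A_not_leaf_gadget[OF EV one_C leaf] by auto
    moreover have "c \<noteq> v"
      using leaf corr unfolding leaf_gadget_def by auto
    ultimately show ?thesis
      using leaf_gadget_old[OF leaf x(1)] unfolding has_gadget_def by blast
  next
    case (path c d b)
    then have "c \<noteq> v" "d \<noteq> v"
      using corr unfolding path_gadget_def by auto
    then show ?thesis
      using path_gadget_old[OF path x(1)] path_gadget_bound_new[OF x one_C path]
      unfolding has_gadget_def by blast
  qed
qed

lemma consistent_at_new: "\<forall>z\<in>V'. consistent_at V' E' S' z"
proof
  fix z assume "z \<in> V'"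
  then consider "z \<in> V" | "z = u1" | "z = u2"
    unfolding V'_def by blast
  then show "consistent_at V' E' S' z"
  proof cases
    case 1
    then show ?thesis
      using consistent_at_old[OF 1 bspec[OF ok 1] has_gadget_old[OF 1]] by blast
  next
    case 2
    have labels: "S' u1 = SA" "S' u2 = SC" "S' v \<noteq> SC"
      using labels_new v corr by auto
    have "u2 \<noteq> v"
      using new v by auto
    then have "nbhd V' E' u1 - {u2} = {v}" "card (nbhd V' E' u1) = 2"
      unfolding nbhd_u1 by auto
    then have "leaf_gadget V' E' S' u1 u2"
      unfolding leaf_gadget_def using nbhd_u1 nbhd_u2 labels(2) by simp
    moreover have "at_most_one_nbr V' E' S' SC u1"
      using labels unfolding at_most_one_nbr_def nbhd_u1 by auto
    ultimately show ?thesis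
      using 2 labels(1) \<open>card (nbhd V' E' u1) = 2\<close> unfolding consistent_at_def has_gadget_def by auto
  next
    case 3
    have "S' u2 = SC" "S' u1 = SA"
      using labels_new by auto
    then show ?thesis
      unfolding 3 consistent_at_def nbhd_u2 by simp
  qed
qed

lemma v_not_leaf: "v \<notin> leaves V E" "v \<notin> leaves V' E'"
proof -
  have "2 \<le> card (nbhd V E v)"
    using consistent_at_degree[OF bspec[OF ok v]] corr by auto
  then show "v \<notin> leaves V E" "v \<notin> leaves V' E'"
    using card_nbhd_v[OF fin] by (auto simp: leaves_eq)
qed

lemma leaves_new: "leaves V' E' = insert u2 (leaves V E)"
proof (rule set_eqI)
  fix z
  have "u2 \<noteq> v"
    using new v by blast
  then have u_leaf: "u1 \<notin> leaves V' E'" "u2 \<in> leaves V' E'"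
    by (simp_all add: leaves_eq nbhd_u1 nbhd_u2 in_V')
  consider "z \<in> V" "z \<noteq> v" | "z = v" | "z = u1" | "z = u2" | "z \<notin> V'"
    unfolding V'_def by blast
  then show "z \<in> leaves V' E' \<longleftrightarrow> z \<in> insert u2 (leaves V E)"
  proof cases
    case 1
    then show ?thesis
      using leaf_iff_old[OF 1] new by auto
  next
    case 2
    then show ?thesis
      using v_not_leaf v new by auto
  next
    case 3
    then show ?thesis
      using u_leaf new leaves_subset[of V E] by auto
  next
    case 4
    then show ?thesis
      using u_leaf by simp
  next
    case 5
    then show ?thesis
      using leaves_subset[of V' E'] leaves_subset[of V E] by (auto simp: in_V')
  qed
qed

lemma supports_new: "supports V' E' = insert u1 (supports V E)"
proof (rule set_eqI)
  fix z
  have not_leaf: "u1 \<notin> leaves V' E'" "v \<notin> leaves V' E'"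
    using leaves_new new v_not_leaf leaves_subset[of V E] by auto
  consider "z \<in> V" | "z = u1" | "z = u2" | "z \<notin> V'"
    unfolding V'_def by blast
  then show "z \<in> supports V' E' \<longleftrightarrow> z \<in> insert u1 (supports V E)"
  proof cases
    case 1
    have "leaves V E - {v} = leaves V E"
      using v_not_leaf by blast
    then show ?thesis
      using support_iff_old[OF 1 not_leaf] 1 new by (auto simp: supports_eq)
  next
    case 2
    then show ?thesis
      using leaves_new nbhd_u1 by (auto simp: supports_eq in_V')
  next
    case 3
    then show ?thesis
      using not_leaf(1) nbhd_u2 new supports_subset[of V E] by (auto simp: supports_eq)
  next
    case 4
    then show ?thesis
      using supports_subset[of V' E'] supports_subset[of V E] by (auto simp: in_V')
  qed
qed

lemma A_vertices_new: "{x \<in> V'. S' x = SA} = insert u1 {x \<in> V. S x = SA}"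
  using labels_new by (auto simp: in_V')

lemma labelling_invariant_new: "labelling_invariant V' E' S'"
  unfolding labelling_invariant_def
proof (intro conjI)
  show "finite V'"
    using finite_new .
  show "\<forall>e\<in>E'. e \<subseteq> V'"
    using EV v unfolding E'_def V'_def by auto
  show "\<forall>z\<in>V'. consistent_at V' E' S' z"
    using consistent_at_new .
  have "card V' = card V + 2"
    using fin new unfolding V'_def by simp
  moreover have "card (insert u1 {x \<in> V. S x = SA}) = Suc (card {x \<in> V. S x = SA})"
    "card (insert u1 (supports V E)) = Suc (card (supports V E))"
    "card (insert u2 (leaves V E)) = Suc (card (leaves V E))"
    using card_insert_outside[OF fin _ new(1)] card_insert_outside[OF fin _ new(2)]
      supports_subset[of V E] leaves_subset[of V E] by auto
  ultimately show "4 * card {x \<in> V'. S' x = SA} = card V' + card (supports V' E') + card (leaves V' E')"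
    unfolding A_vertices_new supports_new leaves_new using count by simp
qed

end

locale leaf_path_extension =
  fixes V :: "'a set" and E :: "'a set set" and S :: "'a \<Rightarrow> status" and v x u1 u2 u3 u4 :: 'a
  assumes inv: "labelling_invariant V E S"
    and v: "v \<in> V" "S v = SC" "nbhd V E v = {x}"
    and new: "distinct [u1, u2, u3, u4]" "u1 \<notin> V" "u2 \<notin> V" "u3 \<notin> V" "u4 \<notin> V"
begin

definition "V' = V \<union> {u1, u2, u3, u4}"
definition "E' = E \<union> {{u1, u2}, {u2, u3}, {u3, u4}, {u1, v}}"
definition "S' = S(u1 := SD, u2 := SB, u3 := SA, u4 := SC)"

lemmas fin = labelling_invariantD(1)[OF inv]
  and EV = labelling_invariantD(2)[OF inv]
  and ok = labelling_invariantD(3)[OF inv]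
  and count = labelling_invariantD(4)[OF inv]

lemma in_V': "z \<in> V' \<longleftrightarrow> z \<in> V \<or> z = u1 \<or> z = u2 \<or> z = u3 \<or> z = u4"
  unfolding V'_def by blast

lemma labels_new: "S' u1 = SD" "S' u2 = SB" "S' u3 = SA" "S' u4 = SC" "z \<in> V \<Longrightarrow> S' z = S z"
  using new unfolding S'_def by auto

lemma nbhd_new:
  "nbhd V' E' z = nbhd V E z \<union> {w \<in> V'. w \<noteq> z \<and> {z, w} \<in> {{u1, u2}, {u2, u3}, {u3, u4}, {u1, v}}}"
  unfolding V'_def E'_def by (rule nbhd_add_edges[OF EV])

lemma nbhd_u: "nbhd V' E' u1 = {v, u2}" "nbhd V' E' u2 = {u1, u3}" "nbhd V' E' u3 = {u2, u4}"
  "nbhd V' E' u4 = {u3}"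
  using new v nbhd_outside[OF EV] unfolding nbhd_new by (auto simp: in_V' doubleton_eq_iff)

sublocale attachment V E S V' E' S' v u1
proof
  show "nbhd V' E' z = nbhd V E z" if "z \<in> V" "z \<noteq> v" for z
    using that new unfolding nbhd_new by (auto simp: in_V' doubleton_eq_iff)
  show "nbhd V' E' v = insert u1 (nbhd V E v)"
    using v new unfolding nbhd_new by (auto simp: in_V' doubleton_eq_iff)
qed (use fin v new labels_new in \<open>auto simp: V'_def\<close>)

lemma x: "x \<in> V" "S x = SA" "x \<noteq> v" "v \<in> nbhd V E x"
proof -
  show "x \<in> V"
    using v(3) nbhd_vertex[of x V E v] by simp
  then show "v \<in> nbhd V E x"
    using v(3) nbhd_sym[of x V E v] v(1) by simp
  show "S x = SA"
    using consistent_at_C[OF bspec[OF ok v(1)] v(2)] v(3) by auto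
  then show "x \<noteq> v"
    using v(2) by auto
qed

lemma one_C_x: "at_most_one_nbr V E S SC x"
  using consistent_at_A[OF bspec[OF ok x(1)] x(2)] by blast

lemma card_nbhd_x: "card (nbhd V E x - {v}) \<le> 1"
proof -
  have "has_gadget V E S x"
    using consistent_at_A[OF bspec[OF ok x(1)] x(2)] by blast
  then consider (leaf) c where "leaf_gadget V E S x c" | (path) c d b where "path_gadget V E S x c d b"
    unfolding has_gadget_def by blast
  then show ?thesis
  proof cases
    case (leaf c)
    then have "c = v"
      using one_C_x x(4) v(2) unfolding leaf_gadget_def at_most_one_nbr_def by blast
    then show ?thesis
      using leaf unfolding leaf_gadget_def by blast
  next
    case (path c d b)
    then have "c = v"
      using one_C_x x(4) v(2) unfolding path_gadget_def at_most_one_nbr_def by blast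
    then have "d = x"
      using path v(3) unfolding path_gadget_def by auto
    then show ?thesis
      using path x(2) unfolding path_gadget_def by auto
  qed
qed

lemma nbhd_v_new: "nbhd V' E' v = {x, u1}"
  using nbhd_v v(3) by auto

lemma x_path_gadget: "path_gadget V' E' S' x v u1 u2"
proof -
  have "nbhd V' E' x = nbhd V E x"
    using nbhd_old[OF x(1,3)] .
  moreover have "S' v = SC" "S' u1 = SD" "S' u2 = SB"
    using labels_new v(1,2) by auto
  ultimately show ?thesis
    unfolding path_gadget_def using x(4) card_nbhd_x nbhd_v_new nbhd_u(1) by simp
qed

lemma has_gadget_old:
  assumes y: "y \<in> V" "S y = SA"
  shows "has_gadget V' E' S' y"
proof (cases "y = x")
  case True
  then show ?thesis
    using x_path_gadget unfolding has_gadget_def by blast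
next
  case False
  have "has_gadget V E S y"
    using consistent_at_A[OF bspec[OF ok y(1)] y(2)] by blast
  have "y \<noteq> v"
    using y(2) v(2) by auto
  have c_not_v: "c \<noteq> v" if "c \<in> nbhd V E y" for c
  proof
    assume "c = v"
    then have "y \<in> nbhd V E v"
      using nbhd_sym[OF that y(1)] by simp
    then show False
      using False v(3) by simp
  qed
  from \<open>has_gadget V E S y\<close> consider (leaf) c where "leaf_gadget V E S y c"
    | (path) c d b where "path_gadget V E S y c d b"
    unfolding has_gadget_def by blast
  then show ?thesis
  proof cases
    case (leaf c)
    then have "c \<noteq> v"
      using c_not_v unfolding leaf_gadget_def by blast
    then show ?thesis
      using leaf_gadget_old[OF leaf y(1) \<open>y \<noteq> v\<close>] unfolding has_gadget_def by blast
  next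
    case (path c d b)
    then have "c \<noteq> v" "d \<noteq> v" "b \<noteq> v"
      "card (nbhd V E y - {c}) \<le> 1 \<or> card (nbhd V E b - {d}) \<le> 1"
      using c_not_v v(2) unfolding path_gadget_def by auto
    then show ?thesis
      using path_gadget_old[OF path y(1)] \<open>y \<noteq> v\<close> unfolding has_gadget_def by blast
  qed
qed

lemma new_distinct: "u1 \<noteq> u2" "u1 \<noteq> u3" "u1 \<noteq> u4" "u2 \<noteq> u3" "u2 \<noteq> u4" "u3 \<noteq> u4"
  "v \<noteq> u1" "v \<noteq> u2" "v \<noteq> u3" "v \<noteq> u4" "x \<noteq> u1" "x \<noteq> u2" "x \<noteq> u3" "x \<noteq> u4"
  using new v(1) x(1) by auto

lemma consistent_at_u1: "consistent_at V' E' S' u1"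
proof -
  have "\<exists>c b y a. nbhd V' E' u1 = {c, b} \<and> S' c = SC \<and> S' b = SB \<and>
      y \<in> nbhd V' E' c \<and> a \<in> nbhd V' E' b \<and> S' y = SA \<and> S' a = SA \<and> y \<noteq> a"
    using nbhd_u nbhd_v_new labels_new v(1,2) x(1,2) new_distinct by (intro exI[of _ v] exI[of _ u2]
        exI[of _ x] exI[of _ u3]) simp
  moreover have "card (nbhd V' E' u1) = 2"
    using nbhd_u(1) new_distinct by simp
  ultimately show ?thesis
    unfolding consistent_at_def using labels_new(1) by simp
qed

lemma consistent_at_u2: "consistent_at V' E' S' u2"
proof -
  have "at_most_one_nbr V' E' S' SD u2"
    unfolding at_most_one_nbr_def nbhd_u(2) using labels_new by auto
  moreover have "card (nbhd V' E' u2) = 2"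
    using nbhd_u(2) new_distinct by simp
  ultimately show ?thesis
    unfolding consistent_at_def using labels_new nbhd_u(2) by simp
qed

lemma consistent_at_u3: "consistent_at V' E' S' u3"
proof -
  have "at_most_one_nbr V' E' S' SC u3"
    unfolding at_most_one_nbr_def nbhd_u(3) using labels_new by auto
  moreover have "leaf_gadget V' E' S' u3 u4"
    unfolding leaf_gadget_def using nbhd_u(3,4) labels_new new_distinct by simp
  moreover have "card (nbhd V' E' u3) = 2"
    using nbhd_u(3) new_distinct by simp
  ultimately show ?thesis
    unfolding consistent_at_def has_gadget_def using labels_new by auto
qed

lemma consistent_at_u4: "consistent_at V' E' S' u4"
  unfolding consistent_at_def using labels_new nbhd_u(4) by simp

lemma consistent_at_new: "\<forall>z\<in>V'. consistent_at V' E' S' z"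
proof
  fix z assume "z \<in> V'"
  then consider "z \<in> V" | "z = u1" | "z = u2" | "z = u3" | "z = u4"
    unfolding in_V' by blast
  then show "consistent_at V' E' S' z"
  proof cases
    case 1
    then show ?thesis
      using consistent_at_old[OF 1 bspec[OF ok 1] has_gadget_old[OF 1]] by blast
  qed (use consistent_at_u1 consistent_at_u2 consistent_at_u3 consistent_at_u4 in simp_all)
qed

lemma v_leaf: "v \<in> leaves V E" "v \<notin> leaves V' E'"
  using v(1,3) nbhd_v_new new_distinct old_subset by (auto simp: leaves_eq)

lemma leaves_u: "u1 \<notin> leaves V' E'" "u2 \<notin> leaves V' E'" "u3 \<notin> leaves V' E'" "u4 \<in> leaves V' E'"
  using nbhd_u new_distinct by (auto simp: leaves_eq in_V')

lemma leaves_new: "leaves V' E' = insert u4 (leaves V E - {v})"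
proof (rule set_eqI)
  fix z
  consider "z \<in> V" "z \<noteq> v" | "z = v" | "z = u1" | "z = u2" | "z = u3" | "z = u4" | "z \<notin> V'"
    unfolding in_V' by blast
  then show "z \<in> leaves V' E' \<longleftrightarrow> z \<in> insert u4 (leaves V E - {v})"
  proof cases
    case 1
    then show ?thesis
      using leaf_iff_old[OF 1] new by auto
  next
    case 7
    then show ?thesis
      using leaves_subset[of V' E'] leaves_subset[of V E] by (auto simp: in_V')
  qed (use v_leaf leaves_u new_distinct new leaves_subset[of V E] in auto)
qed

lemma x_support: "x \<in> supports V E" "x \<notin> supports V' E'"
proof -
  show "x \<in> supports V E"
    using x(1,4) v_leaf(1) by (auto simp: supports_eq)
  have "nbhd V E x \<inter> (leaves V E - {v}) = {}"
  proof (rule ccontr)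
    assume "\<not> ?thesis"
    then obtain l where "l \<in> nbhd V E x" "l \<in> leaves V E" "l \<noteq> v"
      by blast
    then show False
      using one_C_x x(4) v(2) leaf_labelled_C[OF ok] unfolding at_most_one_nbr_def by blast
  qed
  then show "x \<notin> supports V' E'"
    using support_iff_old[OF x(1) leaves_u(1) v_leaf(2)] by blast
qed

lemma supports_new: "supports V' E' = insert u3 (supports V E - {x})"
proof (rule set_eqI)
  fix z
  have new_not_supports: "u1 \<notin> supports V' E'" "u2 \<notin> supports V' E'" "u4 \<notin> supports V' E'"
    using nbhd_u leaves_u v_leaf(2) by (auto simp: supports_eq)
  have "u3 \<in> supports V' E'"
    using nbhd_u(3) leaves_u(4) by (auto simp: supports_eq in_V')
  consider "z \<in> V" "z \<noteq> x" | "z = x" | "z = u1" | "z = u2" | "z = u3" | "z = u4" | "z \<notin> V'"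
    unfolding in_V' by blast
  then show "z \<in> supports V' E' \<longleftrightarrow> z \<in> insert u3 (supports V E - {x})"
  proof cases
    case 1
    have "v \<notin> nbhd V E z"
      using 1 v(3) nbhd_sym[of v V E z] by auto
    then have "nbhd V E z \<inter> (leaves V E - {v}) = nbhd V E z \<inter> leaves V E"
      by blast
    then show ?thesis
      using support_iff_old[OF 1(1) leaves_u(1) v_leaf(2)] 1 new by (auto simp: supports_eq)
  next
    case 7
    then show ?thesis
      using supports_subset[of V' E'] supports_subset[of V E] by (auto simp: in_V')
  qed (use x_support new_not_supports \<open>u3 \<in> supports V' E'\<close> new_distinct new
      supports_subset[of V E] in auto)
qed

lemma A_vertices_new: "{y \<in> V'. S' y = SA} = insert u3 {y \<in> V. S y = SA}"
  using labels_new by (auto simp: in_V')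

lemma labelling_invariant_new: "labelling_invariant V' E' S'"
  unfolding labelling_invariant_def
proof (intro conjI)
  show "finite V'"
    using finite_new .
  show "\<forall>e\<in>E'. e \<subseteq> V'"
    using EV v(1) unfolding E'_def V'_def by auto
  show "\<forall>z\<in>V'. consistent_at V' E' S' z"
    using consistent_at_new .
  have "card V' = card V + 4"
    using fin new unfolding V'_def by simp
  moreover have "card (insert u3 {y \<in> V. S y = SA}) = Suc (card {y \<in> V. S y = SA})"
    by (rule card_insert_outside[OF fin _ new(4)]) blast
  moreover have "card (insert u3 (supports V E - {x})) = card (supports V E)"
  proof -
    have "supports V E - {x} \<subseteq> V"
      using supports_subset[of V E] by blast
    then show ?thesis
      using card_insert_outside[OF fin _ new(4)] card_Suc_Diff1[OF _ x_support(1)]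
        finite_subset[OF supports_subset[of V E] fin] by simp
  qed
  moreover have "card (insert u4 (leaves V E - {v})) = card (leaves V E)"
  proof -
    have "leaves V E - {v} \<subseteq> V"
      using leaves_subset[of V E] by blast
    then show ?thesis
      using card_insert_outside[OF fin _ new(5)] card_Suc_Diff1[OF _ v_leaf(1)]
        finite_subset[OF leaves_subset[of V E] fin] by simp
  qed
  ultimately show "4 * card {y \<in> V'. S' y = SA} = card V' + card (supports V' E') + card (leaves V' E')"
    unfolding A_vertices_new supports_new leaves_new using count by simp
qed

end

section \<open>The family T2\<close>

lemma labelling_invariant_basic_path:
  assumes dist: "distinct [a, b, c, d]"
    and S: "S a = SC" "S b = SA" "S c = SA" "S d = SC"
  shows "labelling_invariant {a, b, c, d} {{a, b}, {b, c}, {c, d}} S"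
proof -
  let ?V = "{a, b, c, d}" and ?E = "{{a, b}, {b, c}, {c, d}}"
  have nbhd: "nbhd ?V ?E a = {b}" "nbhd ?V ?E b = {a, c}" "nbhd ?V ?E c = {b, d}"
    "nbhd ?V ?E d = {c}"
    using dist unfolding nbhd_def adj_def by (auto simp: doubleton_eq_iff)
  have "leaf_gadget ?V ?E S b a" "leaf_gadget ?V ?E S c d"
    using nbhd dist S unfolding leaf_gadget_def by auto
  then have "has_gadget ?V ?E S b" "has_gadget ?V ?E S c"
    unfolding has_gadget_def by blast+
  moreover have "at_most_one_nbr ?V ?E S SC b" "at_most_one_nbr ?V ?E S SC c"
    using nbhd S unfolding at_most_one_nbr_def by auto
  ultimately have "\<forall>z\<in>?V. consistent_at ?V ?E S z"
    using nbhd dist S unfolding consistent_at_def by auto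
  moreover have "leaves ?V ?E = {a, d}"
    using nbhd dist by (auto simp: leaves_eq)
  moreover have "supports ?V ?E = {b, c}"
    using nbhd dist unfolding supports_eq \<open>leaves ?V ?E = {a, d}\<close> by auto
  moreover have "{x \<in> ?V. S x = SA} = {b, c}"
    using S by auto
  ultimately show ?thesis
    using dist unfolding labelling_invariant_def by auto
qed

lemma labelling_invariant_T2: "T2 V E S P \<Longrightarrow> labelling_invariant V E S"
proof (induction rule: T2.induct)
  case (base a b c d S)
  then show ?case
    by (rule labelling_invariant_basic_path)
next
  case (O2 V E S P v u1 u2)
  then interpret pendant_extension V E S P v u1 u2
    by unfold_locales auto
  show ?case
    using labelling_invariant_new unfolding V'_def E'_def S'_def .
next
  case (O3 V E S P v u1 u2 u3 u4)
  then obtain x where "nbhd V E v = {x}"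
    by (metis card_1_singletonE deg_eq_card_nbhd)
  with O3 interpret leaf_path_extension V E S v x u1 u2 u3 u4
    by unfold_locales auto
  show ?case
    using labelling_invariant_new unfolding V'_def E'_def S'_def .
next
  case (O4 V E S P v u1 u2)
  then interpret pendant_extension V E S P v u1 u2
    by unfold_locales auto
  show ?case
    using labelling_invariant_new unfolding V'_def E'_def S'_def .
qed

theorem lemma4p2:
  fixes V :: "'a set" and E :: "'a set set" and S :: "'a \<Rightarrow> status" and P :: "'a set"
  assumes "T2 V E S P"
  shows "real (gamma2d V E) =
         (real (card V) + real (card (supports V E)) + real (card (leaves V E))) / 4"
  using gamma2d_from_labelling_invariant[OF labelling_invariant_T2[OF assms]] .

end
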